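(* Let $(X,\tau_\delta)_{\delta>0}$ be a simple Hilbert dilation system with $d=\dim X$, let $1\le k\le d$ and $H$ a $k$-dimensional subspace of $X$. Let $\eta\in(0,1/2)$ and let $I\subseteq(0,\infty)$ be a compact interval with $r(I)/l(I)\ge(2^d/\eta)^{dk+2}$. Then there exist $\delta\in I$ and a $k$-dimensional dilation-invariant subspace $V\subseteq X$ with $\cos\theta_{\max}(\tau_\delta H,V)\ge1-\eta$.
   Context: A Hilbert dilation system $(X,\tau_\delta)_{\delta>0}$: $X$ is a finite-dimensional real Hilbert space with an orthogonal decomposition $X=\bigoplus_{\nu=1}^m X_\nu$ (some $X_\nu$ may be $\{0\}$), and $\tau_\delta:X\to X$ is linear with $\tau_\delta|_{X_\nu}=\delta^{-\nu}\mathrm{id}$. It is simple if $\dim X_\nu\in\{0,1\}$ for all $\nu$. A subspace $V$ is dilation-invariant if $\tau_\delta V=V$ for all $\delta>0$. For subspaces $V,W$, $\theta_{\max}(V,W)=\arccos\big(\inf\{|\Pi_Wv|/|v|:v\in V\setminus\{0\}\}\big)$, $\Pi_W$ the orthogonal projection. $l(I)\le r(I)$ are the endpoints of $I$. *)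

theory Defs
  imports "HOL-Analysis.Analysis"
begin

definition hilbert_dilation_system ::
    "(nat \<Rightarrow> 'a::euclidean_space set) \<Rightarrow> nat \<Rightarrow> (real \<Rightarrow> 'a \<Rightarrow> 'a) \<Rightarrow> bool" where
  "hilbert_dilation_system Xs m tau \<longleftrightarrow>
     (\<forall>\<nu>\<in>{1..m}. subspace (Xs \<nu>)) \<and>
     (\<forall>i\<in>{1..m}. \<forall>j\<in>{1..m}. i \<noteq> j \<longrightarrow> (\<forall>x\<in>Xs i. \<forall>y\<in>Xs j. x \<bullet> y = 0)) \<and>
     span (\<Union>\<nu>\<in>{1..m}. Xs \<nu>) = UNIV \<and>
     (\<forall>\<delta>>0. linear (tau \<delta>) \<and>
        (\<forall>\<nu>\<in>{1..m}. \<forall>x\<in>Xs \<nu>. tau \<delta> x = (\<delta> powr (- real \<nu>)) *\<^sub>R x))"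

definition simple_dilation_system :: "(nat \<Rightarrow> 'a::euclidean_space set) \<Rightarrow> nat \<Rightarrow> bool" where
  "simple_dilation_system Xs m \<longleftrightarrow> (\<forall>\<nu>\<in>{1..m}. dim (Xs \<nu>) \<le> 1)"

definition dilation_invariant :: "(real \<Rightarrow> 'a \<Rightarrow> 'a) \<Rightarrow> 'a::euclidean_space set \<Rightarrow> bool" where
  "dilation_invariant tau V \<longleftrightarrow> subspace V \<and> (\<forall>\<delta>>0. tau \<delta> ` V = V)"

definition orth_proj :: "'a::euclidean_space set \<Rightarrow> 'a \<Rightarrow> 'a" where
  "orth_proj W v = (THE w. w \<in> W \<and> (\<forall>u\<in>W. (v - w) \<bullet> u = 0))"

definition theta_max :: "'a::euclidean_space set \<Rightarrow> 'a set \<Rightarrow> real" where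
  "theta_max V W = arccos (Inf {norm (orth_proj W v) / norm v | v. v \<in> V \<and> v \<noteq> 0})"

end

(*
  In an orthonormal basis adapted to the grading, tau delta = diag (delta^-w_1, ..., delta^-w_d) with
  integer weights w_1 < ... < w_d, and the coordinate subspaces are dilation-invariant. For a
  subspace W, an index j and s > 0 let c_j(W, s) be the largest dimension of a subspace of W lying in
  the cone where the mass of the coordinates before j is at most s times the mass of the coordinates
  from j on. Since tau (R delta) = tau R o tau delta and tau R shrinks every later coordinate relative
  to every earlier one by a factor of at least R, c_j(tau R W, R) <= c_j(W, 1/R) <= c_j(W, R). The
  potential sum_j c_j(W, R) of a k-dimensional W ranges over a window of width k (d - k), so along
  the scales a R^i, i <= k (d - k), with R = 4 2^d / eta, it stalls at some W = tau delta H, where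
  c_j(W, 1/R) = c_j(W, R) for all j. By a law-of-inertia argument, j -> c_j(W, R) then drops from k
  to 0 in unit steps, and each drop j yields a vector of W concentrated on the j-th coordinate; these
  k vectors span W, which is therefore eta-close to the corresponding coordinate subspace.
*)

theory Submission
  imports Defs
begin

section \<open>Symmetric bilinear forms\<close>

locale symmetric_form =
  fixes B :: "'a::euclidean_space \<Rightarrow> 'a \<Rightarrow> real"
  assumes add_left: "B (x + y) z = B x z + B y z"
    and scale_left: "B (c *\<^sub>R x) z = c * B x z"
    and symmetric: "B x y = B y x"

begin

lemma zero_left [simp]: "B 0 z = 0"
  using scale_left[of 0 z z] by simp

lemma subspace_kernel: "subspace {x. B x u = 0}"
  unfolding subspace_def using add_left scale_left by auto

lemma add_right: "B z (x + y) = B z x + B z y"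
  by (metis add_left symmetric)

lemma scale_right: "B z (c *\<^sub>R x) = c * B z x"
  by (metis scale_left symmetric)

lemma quadratic_add_scale: "B (x + t *\<^sub>R u) (x + t *\<^sub>R u) = B x x + 2 * t * B x u + t\<^sup>2 * B u u"
proof -
  have "B (x + t *\<^sub>R u) (x + t *\<^sub>R u) = B x x + t * B x u + t * (B u x + t * B u u)"
    by (simp only: add_left add_right scale_left scale_right distrib_left)
  then show ?thesis by (simp add: symmetric[of u x] power2_eq_square algebra_simps)
qed

lemma dim_le_dim_kernel_Suc:
  assumes W: "subspace W" and u: "u \<in> W" "B u u \<noteq> 0"
  shows "dim W \<le> dim (W \<inter> {x. B x u = 0}) + 1"
proof -
  let ?W' = "W \<inter> {x. B x u = 0}"
  have W': "subspace ?W'"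
    using W subspace_kernel by (rule subspace_inter)
  have "W \<subseteq> {x + y |x y. x \<in> ?W' \<and> y \<in> span {u}}"
  proof
    fix x assume x: "x \<in> W"
    define t where "t = B x u / B u u"
    have "B (x - t *\<^sub>R u) u = B x u - t * B u u"
      using add_left[of x "- (t *\<^sub>R u)" u] scale_left[of "- t" u u] by simp
    then have "x - t *\<^sub>R u \<in> ?W'"
      using x u W by (simp add: t_def subspace_diff subspace_scale)
    moreover have "t *\<^sub>R u \<in> span {u}"
      by (simp add: span_base span_scale)
    ultimately show "x \<in> {x + y |x y. x \<in> ?W' \<and> y \<in> span {u}}"
      by (metis (mono_tags, lifting) diff_add_cancel mem_Collect_eq)
  qed
  then have "dim W \<le> dim {x + y |x y. x \<in> ?W' \<and> y \<in> span {u}}"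
    by (rule dim_subset)
  also have "\<dots> \<le> dim ?W' + dim (span {u})"
    using dim_sums_Int[OF W' subspace_span[of "{u}"]] by linarith
  also have "\<dots> \<le> dim ?W' + 1"
    by (simp add: dim_span dim_singleton)
  finally show ?thesis .
qed

lemma positive_subspace_extend:
  assumes G: "subspace G" "G \<subseteq> {x. B x u = 0}" "\<forall>g\<in>G. g \<noteq> 0 \<longrightarrow> B g g > 0"
    and u: "B u u > 0"
  defines "G' \<equiv> {x + y |x y. x \<in> G \<and> y \<in> span {u}}"
  shows "subspace G'" "dim G' = dim G + 1" "\<forall>g\<in>G'. g \<noteq> 0 \<longrightarrow> B g g > 0"
proof -
  have u0: "u \<noteq> 0" using u by auto
  show "subspace G'" unfolding G'_def by (rule subspace_sums[OF G(1) subspace_span])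
  have "G \<inter> span {u} \<subseteq> {0}"
  proof
    fix x assume "x \<in> G \<inter> span {u}"
    then obtain t where "x = t *\<^sub>R u" "B x u = 0" using G(2) by (auto simp: span_singleton)
    then show "x \<in> {0}" using u by (simp add: scale_left)
  qed
  then have "dim (G \<inter> span {u}) = 0" by simp
  then show "dim G' = dim G + 1"
    using dim_sums_Int[OF G(1) subspace_span[of "{u}"]] u0 unfolding G'_def by (simp del: dim_eq_0)
  show "\<forall>g\<in>G'. g \<noteq> 0 \<longrightarrow> B g g > 0"
  proof (intro ballI impI)
    fix g assume "g \<in> G'" "g \<noteq> 0"
    then obtain x t where g: "g = x + t *\<^sub>R u" and x: "x \<in> G"
      unfolding G'_def by (auto simp: span_singleton)
    have "B x u = 0" using G(2) x by auto
    then have Bg: "B g g = B x x + t\<^sup>2 * B u u"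
      by (simp add: g quadratic_add_scale)
    show "B g g > 0"
    proof (cases "x = 0")
      case True
      then have "t \<noteq> 0" using \<open>g \<noteq> 0\<close> g by auto
      then show ?thesis using Bg True u by simp
    next
      case False
      then have "B x x > 0" using G(3) x by blast
      moreover have "t\<^sup>2 * B u u \<ge> 0" using u by simp
      ultimately show ?thesis using Bg by linarith
    qed
  qed
qed

text \<open>A form of Sylvester's law of inertia.\<close>
lemma positive_subspace_exists:
  assumes "subspace W"
    and "\<And>U. subspace U \<Longrightarrow> U \<subseteq> W \<Longrightarrow> \<forall>u\<in>U. B u u \<le> 0 \<Longrightarrow> dim U \<le> c"
  shows "\<exists>G. subspace G \<and> G \<subseteq> W \<and> dim W \<le> dim G + c \<and> (\<forall>g\<in>G. g \<noteq> 0 \<longrightarrow> B g g > 0)"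
  using assms
proof (induction "dim W" arbitrary: W rule: less_induct)
  case (less W)
  show ?case
  proof (cases "\<forall>u\<in>W. B u u \<le> 0")
    case True
    then show ?thesis using less.prems by (intro exI[of _ "{0}"]) (auto simp: subspace_0)
  next
    case False
    then obtain u where u: "u \<in> W" "B u u > 0" by force
    let ?W' = "W \<inter> {x. B x u = 0}"
    have W': "subspace ?W'" using less.prems(1) subspace_kernel by (rule subspace_inter)
    have "u \<notin> ?W'" using u by simp
    then have "?W' \<subset> W" using u(1) by blast
    then have "span ?W' \<subset> span W"
      using W' less.prems(1) by (simp only: span_eq_iff[THEN iffD2])
    then have "dim ?W' < dim W" by (rule dim_psubset)
    moreover have "dim U \<le> c" if "subspace U" "U \<subseteq> ?W'" "\<forall>u\<in>U. B u u \<le> 0" for U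
      using less.prems(2) that by blast
    ultimately obtain G where G: "subspace G" "G \<subseteq> ?W'" "dim ?W' \<le> dim G + c"
        "\<forall>g\<in>G. g \<noteq> 0 \<longrightarrow> B g g > 0"
      using less.hyps[OF _ W'] by blast
    define G' where "G' = {x + y |x y. x \<in> G \<and> y \<in> span {u}}"
    have "G' \<subseteq> W"
      using G(2) u(1) less.prems(1) unfolding G'_def
      by (auto intro!: subspace_add simp: span_singleton subspace_scale)
    moreover have "G \<subseteq> {x. B x u = 0}" using G(2) by blast
    note G' = positive_subspace_extend[OF G(1) this G(4) u(2), folded G'_def]
    moreover have "dim W \<le> dim G' + c"
      using G(3) G'(2) dim_le_dim_kernel_Suc[OF less.prems(1) u(1)] u(2) by linarith
    ultimately show ?thesis by blast
  qed
qed

end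

lemma card_strict_descents:
  fixes c :: "nat \<Rightarrow> nat"
  assumes "\<And>j. j < n \<Longrightarrow> c (Suc j) \<le> c j" and "\<And>j. j < n \<Longrightarrow> c j \<le> c (Suc j) + 1"
  shows "card {j. j < n \<and> c (Suc j) < c j} = c 0 - c n \<and> c n \<le> c 0"
  using assms
proof (induction n)
  case (Suc n)
  have "{j. j < Suc n \<and> c (Suc j) < c j} =
      {j. j < n \<and> c (Suc j) < c j} \<union> (if c (Suc n) < c n then {n} else {})"
    by (auto simp: less_Suc_eq)
  moreover have "card {j. j < n \<and> c (Suc j) < c j} = c 0 - c n" "c n \<le> c 0"
    using Suc by auto
  moreover have "c (Suc n) \<le> c n" "c n \<le> c (Suc n) + 1" using Suc.prems by auto
  ultimately show ?case by (cases "c (Suc n) < c n") auto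
qed simp

lemma interleaved_descent_stalls:
  fixes a b :: "nat \<Rightarrow> nat"
  assumes "\<And>i. i < n \<Longrightarrow> b i \<le> a i" and "\<And>i. i < n \<Longrightarrow> a (Suc i) \<le> b i"
    and "a 0 < a n + n"
  shows "\<exists>i<n. b i = a i"
proof (rule ccontr)
  assume neg: "\<not> ?thesis"
  then have desc: "a (Suc i) < a i" if "i < n" for i
  proof -
    have "b i \<noteq> a i" using neg that by blast
    then show ?thesis using assms(1,2)[OF that] by linarith
  qed
  then have "a m + m \<le> a 0" if "m \<le> n" for m
    using that
  proof (induction m)
    case (Suc m)
    then have "a (Suc m) < a m" "a m + m \<le> a 0" using desc[of m] by simp_all
    then show ?case by linarith
  qed simp
  then show False using assms(3) by fastforce
qed

lemma sum_atLeast1_lessThan_Suc_reverse: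
  "1 \<le> n \<Longrightarrow> (\<Sum>j\<in>{1..<Suc n}. g (Suc n - j)) = (g n :: nat) + (\<Sum>j\<in>{1..<n}. g (n - j))"
proof -
  assume "1 \<le> n"
  then have "(\<Sum>j\<in>{1..<Suc n}. g (Suc n - j)) = g n + (\<Sum>j\<in>{Suc 1..<Suc n}. g (Suc n - j))"
    by (subst sum.atLeast_Suc_lessThan) auto
  also have "(\<Sum>j\<in>{Suc 1..<Suc n}. g (Suc n - j)) = (\<Sum>j\<in>{1..<n}. g (Suc n - Suc j))"
    by (rule sum.shift_bounds_Suc_ivl)
  finally show ?thesis by simp
qed

lemma sum_min_eq_sum_diff_plus:
  fixes k d :: nat
  assumes "k \<le> d"
  shows "(\<Sum>j\<in>{1..<d}. min k (d - j)) = (\<Sum>j\<in>{1..<d}. k - j) + k * (d - k)"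
  using assms
proof (induction d rule: nat_induct_at_least)
  case base
  have "(\<Sum>j\<in>{1..<k}. min k (k - j)) = (\<Sum>j\<in>{1..<k}. k - j)" by (intro sum.cong) auto
  then show ?case by simp
next
  case (Suc n)
  have "(\<Sum>j\<in>{1..<Suc n}. min k (Suc n - j)) = min k n + (\<Sum>j\<in>{1..<n}. min k (n - j))"
    using sum_atLeast1_lessThan_Suc_reverse[of n "\<lambda>t. min k t"] by (cases "n = 0") auto
  moreover have "(\<Sum>j\<in>{1..<Suc n}. k - j) = (\<Sum>j\<in>{1..<n}. k - j) + (k - n)"
    using Suc.hyps by (cases "n = 0") auto
  moreover have "k * (Suc n - k) = k * (n - k) + k" using Suc.hyps by (simp add: Suc_diff_le)
  ultimately show ?case using Suc by simp
qed

lemma norm_split_bounds: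
  fixes y z :: "'b::real_normed_vector"
  assumes "(norm z)\<^sup>2 \<le> \<eta> / 4 * (norm y)\<^sup>2" "0 \<le> \<eta>" "\<eta> \<le> 1"
  shows "(norm z)\<^sup>2 \<le> \<eta> * (norm (y + z))\<^sup>2" "norm y \<le> 2 * norm (y + z)"
proof -
  have "(norm z)\<^sup>2 \<le> (sqrt \<eta> / 2 * norm y)\<^sup>2"
    using assms by (simp add: power_mult_distrib power_divide)
  then have z: "norm z \<le> sqrt \<eta> / 2 * norm y"
    by (rule power2_le_imp_le) (simp add: assms(2))
  moreover have "sqrt \<eta> * norm y \<le> norm y"
    using assms(2,3) by (intro mult_left_le_one_le) simp_all
  moreover have "norm y \<le> norm (y + z) + norm z"
    by (metis add_diff_cancel_right' norm_triangle_ineq4)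
  ultimately show y: "norm y \<le> 2 * norm (y + z)" by linarith
  have "sqrt \<eta> * norm y \<le> sqrt \<eta> * (2 * norm (y + z))"
    by (rule mult_left_mono[OF y]) (simp add: assms(2))
  moreover have "2 * norm z \<le> sqrt \<eta> * norm y" using z by simp
  ultimately have "norm z \<le> sqrt \<eta> * norm (y + z)" by linarith
  then have "(norm z)\<^sup>2 \<le> (sqrt \<eta> * norm (y + z))\<^sup>2"
    by (rule power_mono) simp
  then show "(norm z)\<^sup>2 \<le> \<eta> * (norm (y + z))\<^sup>2"
    using assms(2) by (simp add: power_mult_distrib)
qed

lemma norm_sum_sq_le:
  fixes g :: "'i \<Rightarrow> 'b::real_normed_vector"
  assumes "\<And>j. j \<in> K \<Longrightarrow> (norm (g j))\<^sup>2 \<le> c * (x j)\<^sup>2"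
  shows "(norm (\<Sum>j\<in>K. \<alpha> j *\<^sub>R g j))\<^sup>2 \<le> c * card K * (\<Sum>j\<in>K. (\<alpha> j * x j)\<^sup>2)"
proof -
  have "(norm (\<Sum>j\<in>K. \<alpha> j *\<^sub>R g j))\<^sup>2 \<le> (\<Sum>j\<in>K. \<bar>\<alpha> j\<bar> * norm (g j))\<^sup>2"
    by (rule power_mono) (auto intro: order_trans[OF norm_sum] sum_nonneg)
  also have "\<dots> \<le> (\<Sum>j\<in>K. (\<bar>\<alpha> j\<bar> * norm (g j))\<^sup>2) * card K"
    by (rule sum_squared_le_sum_of_squares)
  also have "\<dots> \<le> (\<Sum>j\<in>K. c * (\<alpha> j * x j)\<^sup>2) * card K"
  proof (intro mult_right_mono sum_mono)
    fix j assume "j \<in> K"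
    then have "(\<alpha> j)\<^sup>2 * (norm (g j))\<^sup>2 \<le> (\<alpha> j)\<^sup>2 * (c * (x j)\<^sup>2)"
      by (intro mult_left_mono assms) auto
    then show "(\<bar>\<alpha> j\<bar> * norm (g j))\<^sup>2 \<le> c * (\<alpha> j * x j)\<^sup>2"
      by (simp add: power_mult_distrib algebra_simps)
  qed simp
  finally show ?thesis by (simp add: sum_distrib_left algebra_simps)
qed

lemma unit_vector_spans_line:
  fixes X :: "'a::euclidean_space set"
  assumes "subspace X" "dim X \<le> 1" "X \<noteq> {0}"
  shows "\<exists>u. u \<in> X \<and> norm u = 1 \<and> (\<forall>x\<in>X. x = (x \<bullet> u) *\<^sub>R u)"
proof -
  obtain x where x: "x \<in> X" "x \<noteq> 0" using assms(1,3) subspace_0 by blast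
  define u where "u = (1 / norm x) *\<^sub>R x"
  have u: "u \<in> X" "norm u = 1" using x assms(1) by (simp_all add: u_def subspace_scale)
  have "\<not> X \<subseteq> {0}" using x by blast
  then have "dim X = 1" using assms(2) dim_eq_0[of X] by linarith
  moreover have "independent {u}" using u(2) by auto
  ultimately have "X \<subseteq> span {u}" using card_eq_dim[of "{u}" X] u(1) by simp
  then have "x = (x \<bullet> u) *\<^sub>R u" if "x \<in> X" for x
    using that u(2) by (auto simp: span_singleton dot_square_norm)
  then show ?thesis using u by blast
qed

lemma double_le_power_two: "2 * n \<le> (2::nat) ^ n"
proof (induction n)
  case (Suc n)
  show ?case
  proof (cases "n = 0")
    case False
    then have "(2::nat) ^ 1 \<le> 2 ^ n" by (intro power_increasing) auto
    then show ?thesis using Suc.IH by simp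
  qed simp
qed simp

lemma mult_diff_add_square_eq: "k \<le> (n::nat) \<Longrightarrow> k * (n - k) + 1 + (k\<^sup>2 + 1) = n * k + 2"
  by (simp add: diff_mult_distrib2 power2_eq_square algebra_simps mult_le_mono)

lemma twice_mult_diff_le:
  assumes "1 \<le> k" "k \<le> (n::nat)"
  shows "2 * (k * (n - k) + 1) \<le> (n + 1) * (k\<^sup>2 + 1)"
proof (cases "k = 1")
  case False
  then have "2 * k * n \<le> k * k * n" using assms(1) by (intro mult_right_mono) auto
  then have "2 * (k * n) \<le> k\<^sup>2 * n" by (simp add: power2_eq_square mult.assoc)
  have "2 * (k * (n - k) + 1) \<le> 2 * (k * n) + 2" by simp
  also have "\<dots> \<le> k\<^sup>2 * n + 2" using \<open>2 * (k * n) \<le> k\<^sup>2 * n\<close> by simp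
  also have "\<dots> \<le> (n + 1) * (k\<^sup>2 + 1)"
    using assms by (simp add: algebra_simps)
  finally show ?thesis .
qed simp

lemma dilation_ratio_bounds:
  fixes k n :: nat and \<eta> :: real
  assumes "1 \<le> k" "k < n" "0 < \<eta>" "\<eta> < 1/2"
  defines "X \<equiv> 2 ^ n / \<eta>"
  shows "1 < 4 * X" "8 * real k \<le> (4 * X - 1) * \<eta>" "(4 * X) ^ (k * (n - k) + 1) \<le> X ^ (n * k + 2)"
proof -
  let ?M = "k * (n - k) + 1"
  have "2 ^ n * 2 \<le> 2 ^ n * (1 / \<eta>)"
    using assms(3,4) by (intro mult_left_mono) (simp_all add: field_simps)
  then have X2: "2 ^ (n + 1) \<le> X" by (simp add: X_def)
  then have X1: "1 \<le> X" by (smt (verit) one_le_power)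
  then show "1 < 4 * X" by simp
  have "real (2 * n) \<le> real ((2::nat) ^ n)"
    using double_le_power_two[of n] by (simp only: of_nat_le_iff)
  then have "2 * real n \<le> 2 ^ n" by simp
  then have "8 * real k + 8 \<le> 4 * 2 ^ n" using assms(2) by linarith
  then show "8 * real k \<le> (4 * X - 1) * \<eta>"
    using assms(3,4) by (simp add: X_def algebra_simps)
  have "(2::real) ^ (2 * ?M) \<le> 2 ^ ((n + 1) * (k\<^sup>2 + 1))"
    using twice_mult_diff_le[OF assms(1)] assms(2) by (intro power_increasing) auto
  also have "\<dots> \<le> X ^ (k\<^sup>2 + 1)"
    unfolding power_mult using X2 by (intro power_mono) auto
  finally have "4 ^ ?M \<le> X ^ (k\<^sup>2 + 1)" by (simp add: power_mult)
  then have "(4 * X) ^ ?M \<le> X ^ (k\<^sup>2 + 1) * X ^ ?M"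
    unfolding power_mult_distrib using X1 by (intro mult_right_mono) auto
  also have "\<dots> = X ^ (n * k + 2)"
    using mult_diff_add_square_eq[of k n] assms(2) by (simp add: power_add[symmetric] add.commute)
  finally show "(4 * X) ^ ?M \<le> X ^ (n * k + 2)" .
qed

lemma powr_weights_separated:
  fixes w :: "nat \<Rightarrow> nat" and R :: real
  assumes "R > 1" and w: "\<forall>i j. i < j \<and> j < d \<longrightarrow> w i < w j"
  shows "\<And>j l. l < j \<Longrightarrow> j < d \<Longrightarrow> R * R powr - real (w j) \<le> R powr - real (w l)"
    and "\<And>j l. j \<le> l \<Longrightarrow> l < d \<Longrightarrow> R powr - real (w l) \<le> R powr - real (w j)"
proof -
  fix j l assume "l < j" "j < d"
  then have "1 + - real (w j) \<le> - real (w l)" using w by force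
  then have "R powr (1 + - real (w j)) \<le> R powr - real (w l)" using \<open>R > 1\<close> by (intro powr_mono) auto
  moreover have "R powr (1 + - real (w j)) = R * R powr - real (w j)"
    using \<open>R > 1\<close> by (subst powr_add) simp
  ultimately show "R * R powr - real (w j) \<le> R powr - real (w l)" by simp
next
  fix j l assume "j \<le> l" "l < d"
  then have "w j \<le> w l" using w by (cases "j = l") (auto intro: less_imp_le)
  then show "R powr - real (w l) \<le> R powr - real (w j)" using \<open>R > 1\<close> by (intro powr_mono) auto
qed

section \<open>Orthonormal bases and diagonal maps\<close>

locale orthonormal_basis =
  fixes e :: "nat \<Rightarrow> 'a::euclidean_space" and d :: nat
  assumes inner_basis: "\<And>i j. i < d \<Longrightarrow> j < d \<Longrightarrow> e i \<bullet> e j = (if i = j then 1 else 0)"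
    and span_basis: "span (e ` {..<d}) = UNIV"

begin

lemma inner_sum_basis:
  assumes "l < d" "A \<subseteq> {..<d}"
  shows "(\<Sum>i\<in>A. c i *\<^sub>R e i) \<bullet> e l = (if l \<in> A then c l else 0)"
proof -
  have "(\<Sum>i\<in>A. c i *\<^sub>R e i) \<bullet> e l = (\<Sum>i\<in>A. c i * (e i \<bullet> e l))"
    by (simp add: inner_sum_left)
  also have "\<dots> = (\<Sum>i\<in>A. if i = l then c i else 0)"
    using assms inner_basis by (intro sum.cong) auto
  also have "\<dots> = (if l \<in> A then c l else 0)"
    using finite_subset[OF assms(2)] by (simp add: sum.delta)
  finally show ?thesis .
qed

lemma basis_expansion: "x = (\<Sum>i<d. (x \<bullet> e i) *\<^sub>R e i)"
proof -
  define y where "y = x - (\<Sum>i<d. (x \<bullet> e i) *\<^sub>R e i)"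
  have "orthogonal y z" if "z \<in> e ` {..<d}" for z
    using that inner_sum_basis by (auto simp: y_def orthogonal_def inner_diff_left)
  then have "orthogonal y y" using orthogonal_to_span[of y "e ` {..<d}" y] span_basis by auto
  then show ?thesis by (simp add: y_def orthogonal_def)
qed

lemma norm_sq_coords: "(norm x)\<^sup>2 = (\<Sum>i<d. (x \<bullet> e i)\<^sup>2)"
proof -
  have "(norm x)\<^sup>2 = (\<Sum>i<d. (x \<bullet> e i) *\<^sub>R e i) \<bullet> x"
    using arg_cong[OF basis_expansion, of "\<lambda>z. z \<bullet> x" x] by (simp add: power2_norm_eq_inner)
  also have "\<dots> = (\<Sum>i<d. (x \<bullet> e i) * (e i \<bullet> x))"
    by (simp add: inner_sum_left)
  also have "\<dots> = (\<Sum>i<d. (x \<bullet> e i)\<^sup>2)"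
    by (simp add: inner_commute power2_eq_square)
  finally show ?thesis .
qed

lemma coords_eq_0_imp_eq_0: "(\<And>l. l < d \<Longrightarrow> x \<bullet> e l = 0) \<Longrightarrow> x = 0"
  by (subst basis_expansion) simp

lemma inj_on_basis: "inj_on e {..<d}"
  by (rule inj_onI) (metis inner_basis lessThan_iff zero_neq_one)

lemma independent_basis:
  assumes "A \<subseteq> {..<d}"
  shows "independent (e ` A)"
proof (rule pairwise_orthogonal_independent)
  show "pairwise orthogonal (e ` A)"
    using assms inner_basis by (auto simp: pairwise_def orthogonal_def subset_iff)
  have "e i \<noteq> 0" if "i < d" for i
    using inner_basis[OF that that] by auto
  then show "0 \<notin> e ` A" using assms by auto
qed

lemma dim_span_basis: "A \<subseteq> {..<d} \<Longrightarrow> dim (span (e ` A)) = card A"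
  using dim_span_eq_card_independent[OF independent_basis] card_image inj_on_subset[OF inj_on_basis]
  by metis

lemma dim_eq_DIM: "d = DIM('a)"
  using dim_span_basis[of "{..<d}"] span_basis by simp

lemma inner_span_basis_eq_0:
  assumes "x \<in> span (e ` A)" "A \<subseteq> {..<d}" "l < d" "l \<notin> A"
  shows "x \<bullet> e l = 0"
proof -
  have "orthogonal (e l) x"
    by (rule orthogonal_to_span[OF assms(1)]) (use assms inner_basis in \<open>auto simp: orthogonal_def\<close>)
  then show ?thesis by (simp add: orthogonal_def inner_commute)
qed

definition coord_proj :: "nat set \<Rightarrow> 'a \<Rightarrow> 'a" where
  "coord_proj A x = (\<Sum>i\<in>A. (x \<bullet> e i) *\<^sub>R e i)"

lemma inner_coord_proj:
  "A \<subseteq> {..<d} \<Longrightarrow> l < d \<Longrightarrow> coord_proj A x \<bullet> e l = (if l \<in> A then x \<bullet> e l else 0)"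
  unfolding coord_proj_def by (rule inner_sum_basis)

lemma coord_proj_in_span: "coord_proj A x \<in> span (e ` A)"
  unfolding coord_proj_def by (intro span_sum span_scale span_base) auto

lemma linear_coord_proj: "linear (coord_proj A)"
  unfolding coord_proj_def
  by (rule linearI) (simp_all add: inner_add_left scaleR_add_left sum.distrib scaleR_sum_right)

lemma coord_proj_all: "coord_proj {..<d} x = x"
  unfolding coord_proj_def using basis_expansion[of x] by simp

lemma span_basis_eq: "A \<subseteq> {..<d} \<Longrightarrow> span (e ` A) = {x. \<forall>l<d. l \<notin> A \<longrightarrow> x \<bullet> e l = 0}"
proof (intro equalityI subsetI)
  fix x assume "A \<subseteq> {..<d}" "x \<in> {x. \<forall>l<d. l \<notin> A \<longrightarrow> x \<bullet> e l = 0}"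
  then have "x - coord_proj A x = 0"
    by (intro coords_eq_0_imp_eq_0) (auto simp: inner_coord_proj inner_diff_left)
  then show "x \<in> span (e ` A)" using coord_proj_in_span by (metis eq_iff_diff_eq_0)
qed (use inner_span_basis_eq_0 in auto)

lemma coord_proj_span:
  assumes "A \<subseteq> {..<d}" "y \<in> span (e ` A)"
  shows "coord_proj A y = y"
proof -
  have "coord_proj A y - y = 0"
    using assms inner_span_basis_eq_0
    by (intro coords_eq_0_imp_eq_0) (auto simp: inner_coord_proj inner_diff_left)
  then show ?thesis by simp
qed

lemma coord_proj_orthogonal:
  assumes "A \<subseteq> {..<d}" "u \<in> span (e ` A)"
  shows "(v - coord_proj A v) \<bullet> u = 0"
proof -
  have "orthogonal (v - coord_proj A v) u"
  proof (rule orthogonal_to_span[OF assms(2)])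
    fix y assume "y \<in> e ` A"
    then obtain l where "l \<in> A" "y = e l" by auto
    then show "orthogonal (v - coord_proj A v) y"
      using assms(1) inner_coord_proj[OF assms(1)] by (auto simp: orthogonal_def inner_diff_left)
  qed
  then show ?thesis by (simp add: orthogonal_def)
qed

lemma orth_proj_span_basis:
  assumes A: "A \<subseteq> {..<d}"
  shows "orth_proj (span (e ` A)) v = coord_proj A v"
  unfolding orth_proj_def
proof (rule the_equality)
  show "coord_proj A v \<in> span (e ` A) \<and> (\<forall>u\<in>span (e ` A). (v - coord_proj A v) \<bullet> u = 0)"
    using coord_proj_in_span coord_proj_orthogonal[OF A] by auto
  fix w assume w: "w \<in> span (e ` A) \<and> (\<forall>u\<in>span (e ` A). (v - w) \<bullet> u = 0)"
  have m: "w - coord_proj A v \<in> span (e ` A)" using w coord_proj_in_span by (simp add: span_diff)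
  have "(v - w) \<bullet> (w - coord_proj A v) = 0" using w m by auto
  moreover have "(v - coord_proj A v) \<bullet> (w - coord_proj A v) = 0" using coord_proj_orthogonal[OF A m] .
  ultimately have "(w - coord_proj A v) \<bullet> (w - coord_proj A v) = 0"
    by (simp add: inner_diff_left inner_diff_right algebra_simps)
  then show "w = coord_proj A v" by simp
qed

lemma norm_sq_coord_proj_add:
  assumes "A \<subseteq> {..<d}"
  shows "(norm v)\<^sup>2 = (norm (coord_proj A v))\<^sup>2 + (norm (v - coord_proj A v))\<^sup>2"
proof -
  have "orthogonal (coord_proj A v) (v - coord_proj A v)"
    using coord_proj_orthogonal[OF assms coord_proj_in_span, of v]
    by (simp add: orthogonal_def inner_commute)
  then show ?thesis using norm_add_Pythagorean by fastforce
qed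

lemma dim_le_card_if_coords_determine:
  assumes U: "subspace U" and A: "A \<subseteq> {..<d}"
    and det: "\<And>u. u \<in> U \<Longrightarrow> (\<And>l. l \<in> A \<Longrightarrow> u \<bullet> e l = 0) \<Longrightarrow> u = 0"
  shows "dim U \<le> card A"
proof -
  have "inj_on (coord_proj A) (span U)"
  proof (rule inj_onI)
    fix x y assume "x \<in> span U" "y \<in> span U" "coord_proj A x = coord_proj A y"
    moreover have "span U = U" using U by simp
    ultimately have "x - y \<in> U" "coord_proj A (x - y) = 0"
      using U linear_diff[OF linear_coord_proj] by (auto simp: subspace_diff)
    then show "x = y"
      using det[of "x - y"] inner_coord_proj[OF A] A by (metis eq_iff_diff_eq_0 inner_zero_left subsetD lessThan_iff)
  qed
  then have "dim U = dim (coord_proj A ` U)" using dim_image_eq[OF linear_coord_proj] by simp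
  also have "\<dots> \<le> card (e ` A)"
    using A finite_subset by (intro dim_le_card) (auto intro: coord_proj_in_span)
  also have "\<dots> \<le> card A" using A finite_subset card_image_le by blast
  finally show ?thesis .
qed

definition coord_sqsum :: "nat set \<Rightarrow> 'a \<Rightarrow> real" where
  "coord_sqsum A x = (\<Sum>i\<in>A. (x \<bullet> e i)\<^sup>2)"

lemma coord_sqsum_nonneg: "coord_sqsum A x \<ge> 0"
  unfolding coord_sqsum_def by (simp add: sum_nonneg)

lemma coord_sqsum_mono: "A \<subseteq> B \<Longrightarrow> finite B \<Longrightarrow> coord_sqsum A x \<le> coord_sqsum B x"
  unfolding coord_sqsum_def by (rule sum_mono2) auto

lemma coord_sqsum_le_0_imp_coord_eq_0:
  "finite A \<Longrightarrow> coord_sqsum A x \<le> 0 \<Longrightarrow> l \<in> A \<Longrightarrow> x \<bullet> e l = 0"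
proof -
  assume "finite A" "coord_sqsum A x \<le> 0" "l \<in> A"
  moreover have "(x \<bullet> e l)\<^sup>2 \<le> coord_sqsum A x"
    unfolding coord_sqsum_def using \<open>finite A\<close> \<open>l \<in> A\<close> by (intro member_le_sum) auto
  ultimately have "(x \<bullet> e l)\<^sup>2 \<le> 0" by linarith
  then show ?thesis by simp
qed

lemma coord_sqsum_lessThan_Suc: "coord_sqsum {..<Suc j} u = coord_sqsum {..<j} u + (u \<bullet> e j)\<^sup>2"
  unfolding coord_sqsum_def by simp

lemma coord_sqsum_atLeast_split:
  "j < d \<Longrightarrow> coord_sqsum {j..<d} u = (u \<bullet> e j)\<^sup>2 + coord_sqsum {Suc j..<d} u"
  unfolding coord_sqsum_def by (simp add: sum.atLeast_Suc_lessThan)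

lemma coord_sqsum_remove:
  assumes "j < d"
  shows "coord_sqsum ({..<d} - {j}) u = coord_sqsum {..<j} u + coord_sqsum {Suc j..<d} u"
proof -
  have split: "{..<d} - {j} = {..<j} \<union> {Suc j..<d}" using assms by auto
  show ?thesis unfolding coord_sqsum_def split by (rule sum.union_disjoint) auto
qed

lemma norm_sq_sum_basis:
  assumes "K \<subseteq> {..<d}"
  shows "(norm (\<Sum>j\<in>K. c j *\<^sub>R e j))\<^sup>2 = (\<Sum>j\<in>K. (c j)\<^sup>2)"
proof -
  have "(norm (\<Sum>j\<in>K. c j *\<^sub>R e j))\<^sup>2 = (\<Sum>l<d. if l \<in> K then (c l)\<^sup>2 else 0)"
    unfolding norm_sq_coords using assms by (intro sum.cong) (auto simp: inner_sum_basis)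
  also have "\<dots> = (\<Sum>l\<in>{..<d} \<inter> K. (c l)\<^sup>2)"
    by (simp add: sum.inter_restrict)
  finally show ?thesis using assms by (simp add: Int_absorb1)
qed

lemma norm_sq_remove_coord:
  assumes "j < d"
  shows "(norm (v - (v \<bullet> e j) *\<^sub>R e j))\<^sup>2 = coord_sqsum ({..<d} - {j}) v"
proof -
  have "(norm (v - (v \<bullet> e j) *\<^sub>R e j))\<^sup>2 = (\<Sum>l<d. ((v - (v \<bullet> e j) *\<^sub>R e j) \<bullet> e l)\<^sup>2)"
    by (rule norm_sq_coords)
  also have "\<dots> = (\<Sum>l\<in>{..<d} - {j}. ((v - (v \<bullet> e j) *\<^sub>R e j) \<bullet> e l)\<^sup>2)"
    using assms inner_basis by (intro sum.mono_neutral_right) (auto simp: inner_diff_left)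
  also have "\<dots> = coord_sqsum ({..<d} - {j}) v"
    unfolding coord_sqsum_def using assms inner_basis by (intro sum.cong) (auto simp: inner_diff_left)
  finally show ?thesis .
qed

definition diag_map :: "(nat \<Rightarrow> real) \<Rightarrow> 'a \<Rightarrow> 'a" where
  "diag_map \<mu> x = (\<Sum>l<d. (\<mu> l * (x \<bullet> e l)) *\<^sub>R e l)"

lemma linear_diag_map: "linear (diag_map \<mu>)"
  unfolding diag_map_def
  by (rule linearI)
    (simp_all add: inner_add_left distrib_left scaleR_add_left sum.distrib scaleR_sum_right mult.left_commute)

lemma inner_diag_map: "l < d \<Longrightarrow> diag_map \<mu> x \<bullet> e l = \<mu> l * (x \<bullet> e l)"
  unfolding diag_map_def by (subst inner_sum_basis) auto

lemma diag_map_comp: "diag_map \<mu> (diag_map \<nu> x) = diag_map (\<lambda>l. \<mu> l * \<nu> l) x"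
  unfolding diag_map_def[of \<mu>] diag_map_def[of "\<lambda>l. \<mu> l * \<nu> l"]
  by (intro sum.cong) (auto simp: inner_diag_map)

lemma diag_map_inverse:
  assumes "\<And>l. l < d \<Longrightarrow> \<mu> l \<noteq> 0"
  shows "diag_map (\<lambda>l. 1 / \<mu> l) (diag_map \<mu> x) = x" "diag_map \<mu> (diag_map (\<lambda>l. 1 / \<mu> l) x) = x"
proof -
  have "diag_map (\<lambda>l. 1 / \<mu> l * \<mu> l) x = diag_map (\<lambda>_. 1) x"
    "diag_map (\<lambda>l. \<mu> l * (1 / \<mu> l)) x = diag_map (\<lambda>_. 1) x"
    unfolding diag_map_def using assms by (auto intro: sum.cong)
  moreover have "diag_map (\<lambda>_. 1) x = x"
    unfolding diag_map_def using basis_expansion[of x] by simp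
  ultimately show "diag_map (\<lambda>l. 1 / \<mu> l) (diag_map \<mu> x) = x" "diag_map \<mu> (diag_map (\<lambda>l. 1 / \<mu> l) x) = x"
    by (simp_all add: diag_map_comp)
qed

lemma dim_diag_map_image:
  assumes "\<And>l. l < d \<Longrightarrow> \<mu> l \<noteq> 0"
  shows "dim (diag_map \<mu> ` H) = dim H"
proof -
  have "inj_on (diag_map \<mu>) (span H)"
    by (rule inj_on_inverseI[where g="diag_map (\<lambda>l. 1 / \<mu> l)"]) (use diag_map_inverse assms in auto)
  then show ?thesis by (rule dim_image_eq[OF linear_diag_map])
qed

lemma diag_map_span_basis:
  assumes A: "A \<subseteq> {..<d}" and \<mu>: "\<And>l. l < d \<Longrightarrow> \<mu> l \<noteq> 0"
  shows "diag_map \<mu> ` span (e ` A) = span (e ` A)"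
proof
  show "diag_map \<mu> ` span (e ` A) \<subseteq> span (e ` A)"
    unfolding span_basis_eq[OF A] by (auto simp: inner_diag_map)
  show "span (e ` A) \<subseteq> diag_map \<mu> ` span (e ` A)"
  proof
    fix x assume "x \<in> span (e ` A)"
    then have "diag_map (\<lambda>l. 1 / \<mu> l) x \<in> span (e ` A)"
      unfolding span_basis_eq[OF A] by (auto simp: inner_diag_map)
    moreover have "x = diag_map \<mu> (diag_map (\<lambda>l. 1 / \<mu> l) x)"
      using diag_map_inverse(2)[of \<mu> x] \<mu> by simp
    ultimately show "x \<in> diag_map \<mu> ` span (e ` A)" by blast
  qed
qed

lemma linear_eq_diag_map:
  assumes "linear T" "\<And>i. i < d \<Longrightarrow> T (e i) = \<mu> i *\<^sub>R e i"
  shows "T = diag_map \<mu>"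
proof
  fix x
  have "T x = T (\<Sum>i<d. (x \<bullet> e i) *\<^sub>R e i)" using basis_expansion[of x] by simp
  also have "\<dots> = (\<Sum>i<d. (x \<bullet> e i) *\<^sub>R T (e i))"
    using assms(1) by (simp add: linear_sum linear_scale)
  also have "\<dots> = diag_map \<mu> x"
    unfolding diag_map_def using assms(2) by (intro sum.cong) auto
  finally show "T x = diag_map \<mu> x" .
qed

lemma diag_map_powr_mult:
  assumes "\<delta> > 0" "R > 0"
  shows "diag_map (\<lambda>l. (\<delta> * R) powr - real (w l)) = diag_map (\<lambda>l. R powr - real (w l)) \<circ>
    diag_map (\<lambda>l. \<delta> powr - real (w l))"
  using assms by (auto simp: diag_map_comp powr_mult mult.commute)

section \<open>Cone dimensions\<close>

definition in_cone :: "nat \<Rightarrow> real \<Rightarrow> 'a \<Rightarrow> bool" where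
  "in_cone j s x \<longleftrightarrow> coord_sqsum {..<j} x \<le> s * coord_sqsum {j..<d} x"

definition cone_subspace :: "'a set \<Rightarrow> nat \<Rightarrow> real \<Rightarrow> 'a set \<Rightarrow> bool" where
  "cone_subspace W j s U \<longleftrightarrow> subspace U \<and> U \<subseteq> W \<and> (\<forall>u\<in>U. in_cone j s u)"

definition cone_dim :: "'a set \<Rightarrow> nat \<Rightarrow> real \<Rightarrow> nat" where
  "cone_dim W j s = Max {dim U | U. cone_subspace W j s U}"

lemma cone_dims_finite_nonempty:
  assumes "subspace W"
  shows "finite {dim U | U. cone_subspace W j s U}" "{dim U | U. cone_subspace W j s U} \<noteq> {}"
proof -
  have "{dim U | U. cone_subspace W j s U} \<subseteq> {..dim W}"
    by (auto simp: cone_subspace_def intro: dim_subset)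
  then show "finite {dim U | U. cone_subspace W j s U}" by (rule finite_subset) simp
  have "cone_subspace W j s {0}"
    using assms by (auto simp: cone_subspace_def in_cone_def coord_sqsum_def subspace_0)
  then show "{dim U | U. cone_subspace W j s U} \<noteq> {}" by blast
qed

lemma cone_dim_ge: "subspace W \<Longrightarrow> cone_subspace W j s U \<Longrightarrow> dim U \<le> cone_dim W j s"
  unfolding cone_dim_def using cone_dims_finite_nonempty by (intro Max_ge) auto

lemma cone_dim_attained: "subspace W \<Longrightarrow> \<exists>U. cone_subspace W j s U \<and> dim U = cone_dim W j s"
  using Max_in[OF cone_dims_finite_nonempty] unfolding cone_dim_def by fastforce

lemma cone_dim_le_dim: "subspace W \<Longrightarrow> cone_dim W j s \<le> dim W"
  using cone_dim_attained[of W j s] by (metis cone_subspace_def dim_subset)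

lemma cone_dim_mono:
  assumes W: "subspace W" and "s \<le> s'"
  shows "cone_dim W j s \<le> cone_dim W j s'"
proof -
  obtain U where U: "cone_subspace W j s U" "dim U = cone_dim W j s"
    using cone_dim_attained[OF W] by blast
  have "cone_subspace W j s' U"
    using U(1) mult_right_mono[OF \<open>s \<le> s'\<close> coord_sqsum_nonneg] order_trans
    unfolding cone_subspace_def in_cone_def by blast
  then show ?thesis using cone_dim_ge[OF W] U(2) by metis
qed

lemma cone_dim_le_codim:
  assumes W: "subspace W"
  shows "cone_dim W j s \<le> d - j"
proof -
  obtain U where U: "cone_subspace W j s U" "dim U = cone_dim W j s"
    using cone_dim_attained[OF W] by blast
  have "dim U \<le> card {j..<d}"
  proof (rule dim_le_card_if_coords_determine)
    show "subspace U" using U(1) by (simp add: cone_subspace_def)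
    fix u assume u: "u \<in> U" and hi: "\<And>l. l \<in> {j..<d} \<Longrightarrow> u \<bullet> e l = 0"
    then have "coord_sqsum {..<j} u \<le> 0"
      using U(1) unfolding cone_subspace_def in_cone_def coord_sqsum_def by auto
    then have "u \<bullet> e l = 0" if "l < j" for l
      using coord_sqsum_le_0_imp_coord_eq_0[of "{..<j}"] that by auto
    then show "u = 0" using hi by (intro coords_eq_0_imp_eq_0) (meson atLeastLessThan_iff not_le)
  qed auto
  then show ?thesis using U(2) by simp
qed

lemma cone_dim_ge_dim_diff:
  assumes W: "subspace W" and "j \<le> d" "0 \<le> s"
  shows "dim W - j \<le> cone_dim W j s"
proof -
  define E where "E = span (e ` {j..<d})"
  have E: "subspace E" "dim E = d - j"
    unfolding E_def by (simp, subst dim_span_basis) auto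
  have "cone_subspace W j s (W \<inter> E)"
    unfolding cone_subspace_def
  proof (intro conjI ballI)
    show "subspace (W \<inter> E)" using W E(1) by (rule subspace_inter)
    fix u assume "u \<in> W \<inter> E"
    then have "u \<bullet> e l = 0" if "l < j" for l
      using inner_span_basis_eq_0[of u "{j..<d}" l] that assms(2) unfolding E_def by fastforce
    then show "in_cone j s u"
      using \<open>0 \<le> s\<close> coord_sqsum_nonneg unfolding in_cone_def coord_sqsum_def by simp
  qed auto
  moreover have "dim {x + y |x y. x \<in> W \<and> y \<in> E} + dim (W \<inter> E) = dim W + dim E"
    by (rule dim_sums_Int[OF W E(1)])
  moreover have "dim {x + y |x y. x \<in> W \<and> y \<in> E} \<le> d"
    using dim_subset_UNIV[of "{x + y |x y. x \<in> W \<and> y \<in> E}"] dim_eq_DIM by simp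
  ultimately show ?thesis using cone_dim_ge[OF W] E(2) assms(2) by fastforce
qed

lemma cone_dim_0: "subspace W \<Longrightarrow> 0 \<le> s \<Longrightarrow> cone_dim W 0 s = dim W"
  using cone_dim_ge_dim_diff[of W 0 s] cone_dim_le_dim[of W 0 s] by simp

lemma cone_dim_Suc_le:
  assumes W: "subspace W" and "j < d" "0 \<le> s"
  shows "cone_dim W (Suc j) s \<le> cone_dim W j s"
proof -
  obtain U where U: "cone_subspace W (Suc j) s U" "dim U = cone_dim W (Suc j) s"
    using cone_dim_attained[OF W] by blast
  have "in_cone j s u" if "in_cone (Suc j) s u" for u
  proof -
    have "coord_sqsum {..<j} u \<le> coord_sqsum {..<Suc j} u" by (rule coord_sqsum_mono) auto
    also have "\<dots> \<le> s * coord_sqsum {Suc j..<d} u" using that by (simp add: in_cone_def)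
    also have "\<dots> \<le> s * coord_sqsum {j..<d} u"
      using \<open>0 \<le> s\<close> by (intro mult_left_mono coord_sqsum_mono) auto
    finally show ?thesis by (simp add: in_cone_def)
  qed
  then have "cone_subspace W j s U" using U(1) by (auto simp: cone_subspace_def)
  then show ?thesis using cone_dim_ge[OF W] U(2) by metis
qed

lemma in_cone_of_diag_map:
  assumes cone: "in_cone j s (diag_map \<mu> v)" and "j \<le> d" "R > 0" "q > 0" "s \<ge> 0"
    and \<mu>: "\<And>l. l < d \<Longrightarrow> \<mu> l > 0"
    and lo: "\<And>l. l < j \<Longrightarrow> R * q \<le> \<mu> l"
    and hi: "\<And>l. j \<le> l \<Longrightarrow> l < d \<Longrightarrow> \<mu> l \<le> q"
  shows "in_cone j (s / R\<^sup>2) v"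
proof -
  have "(R * q)\<^sup>2 * coord_sqsum {..<j} v \<le> coord_sqsum {..<j} (diag_map \<mu> v)"
    unfolding coord_sqsum_def sum_distrib_left
  proof (rule sum_mono)
    fix l assume "l \<in> {..<j}"
    then have "l < d" "(R * q)\<^sup>2 \<le> (\<mu> l)\<^sup>2"
      using \<open>j \<le> d\<close> lo \<open>R > 0\<close> \<open>q > 0\<close> by (auto intro!: power_mono)
    then show "(R * q)\<^sup>2 * (v \<bullet> e l)\<^sup>2 \<le> (diag_map \<mu> v \<bullet> e l)\<^sup>2"
      by (simp add: inner_diag_map power_mult_distrib mult_right_mono)
  qed
  also have "\<dots> \<le> s * coord_sqsum {j..<d} (diag_map \<mu> v)"
    using cone by (simp add: in_cone_def)
  also have "\<dots> \<le> s * (q\<^sup>2 * coord_sqsum {j..<d} v)"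
  proof (rule mult_left_mono[OF _ \<open>s \<ge> 0\<close>])
    show "coord_sqsum {j..<d} (diag_map \<mu> v) \<le> q\<^sup>2 * coord_sqsum {j..<d} v"
      unfolding coord_sqsum_def sum_distrib_left
    proof (rule sum_mono)
      fix l assume "l \<in> {j..<d}"
      then have "l < d" "(\<mu> l)\<^sup>2 \<le> q\<^sup>2"
        using hi \<mu>[of l] by (auto intro!: power_mono)
      then show "(diag_map \<mu> v \<bullet> e l)\<^sup>2 \<le> q\<^sup>2 * (v \<bullet> e l)\<^sup>2"
        by (simp add: inner_diag_map power_mult_distrib mult_right_mono)
    qed
  qed
  finally have "q\<^sup>2 * (R\<^sup>2 * coord_sqsum {..<j} v) \<le> q\<^sup>2 * (s * coord_sqsum {j..<d} v)"
    by (simp add: power_mult_distrib algebra_simps)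
  then have "R\<^sup>2 * coord_sqsum {..<j} v \<le> s * coord_sqsum {j..<d} v" using \<open>q > 0\<close> by simp
  then show ?thesis unfolding in_cone_def using \<open>R > 0\<close> by (simp add: field_simps)
qed

lemma cone_dim_diag_map_image_le:
  assumes W: "subspace W" and "j \<le> d" "R > 0" "q > 0" "s \<ge> 0"
    and \<mu>: "\<And>l. l < d \<Longrightarrow> \<mu> l > 0"
    and lo: "\<And>l. l < j \<Longrightarrow> R * q \<le> \<mu> l"
    and hi: "\<And>l. j \<le> l \<Longrightarrow> l < d \<Longrightarrow> \<mu> l \<le> q"
  shows "cone_dim (diag_map \<mu> ` W) j s \<le> cone_dim W j (s / R\<^sup>2)"
proof -
  let ?g = "diag_map (\<lambda>l. 1 / \<mu> l)"
  have \<mu>0: "\<And>l. l < d \<Longrightarrow> \<mu> l \<noteq> 0" using \<mu> by (metis less_irrefl)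
  obtain U where U: "cone_subspace (diag_map \<mu> ` W) j s U" "dim U = cone_dim (diag_map \<mu> ` W) j s"
    using cone_dim_attained[OF linear_subspace_image[OF linear_diag_map W]] by blast
  have "cone_subspace W j (s / R\<^sup>2) (?g ` U)"
    unfolding cone_subspace_def
  proof (intro conjI ballI)
    show "subspace (?g ` U)"
      using U(1) by (simp add: cone_subspace_def linear_subspace_image[OF linear_diag_map])
    show "?g ` U \<subseteq> W" using U(1) diag_map_inverse(1)[OF \<mu>0] by (auto simp: cone_subspace_def)
    fix v assume "v \<in> ?g ` U"
    then have "in_cone j s (diag_map \<mu> v)"
      using U(1) diag_map_inverse(2)[OF \<mu>0] by (auto simp: cone_subspace_def)
    then show "in_cone j (s / R\<^sup>2) v" by (rule in_cone_of_diag_map[where q = q]) (use assms in auto)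
  qed
  moreover have "inj_on ?g (span U)"
    by (rule inj_on_inverseI[where g="diag_map \<mu>"]) (rule diag_map_inverse(2)[OF \<mu>0])
  then have "dim (?g ` U) = dim U" by (rule dim_image_eq[OF linear_diag_map])
  ultimately show ?thesis using cone_dim_ge[OF W] U(2) by metis
qed

definition cone_potential :: "'a set \<Rightarrow> real \<Rightarrow> nat" where
  "cone_potential W s = (\<Sum>j\<in>{1..<d}. cone_dim W j s)"

lemma cone_potential_bounds:
  assumes "subspace W" "dim W = k" "k \<le> d" "0 \<le> s"
  shows "(\<Sum>j\<in>{1..<d}. k - j) \<le> cone_potential W s"
    and "cone_potential W s \<le> (\<Sum>j\<in>{1..<d}. k - j) + k * (d - k)"
proof -
  show "(\<Sum>j\<in>{1..<d}. k - j) \<le> cone_potential W s"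
    unfolding cone_potential_def using cone_dim_ge_dim_diff[OF assms(1)] assms by (intro sum_mono) auto
  have "cone_potential W s \<le> (\<Sum>j\<in>{1..<d}. min k (d - j))"
    unfolding cone_potential_def using cone_dim_le_codim[OF assms(1)] cone_dim_le_dim[OF assms(1)] assms(2)
    by (intro sum_mono) (simp add: min_def)
  then show "cone_potential W s \<le> (\<Sum>j\<in>{1..<d}. k - j) + k * (d - k)"
    using sum_min_eq_sum_diff_plus[OF assms(3)] by simp
qed

lemma cone_potential_mono: "subspace W \<Longrightarrow> s \<le> s' \<Longrightarrow> cone_potential W s \<le> cone_potential W s'"
  unfolding cone_potential_def by (intro sum_mono cone_dim_mono)

lemma cone_potential_diag_map_image_le:
  assumes W: "subspace W" and "R > 0" and \<mu>: "\<And>l. l < d \<Longrightarrow> \<mu> l > 0"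
    and sep: "\<And>j l. 1 \<le> j \<Longrightarrow> j < d \<Longrightarrow> l < j \<Longrightarrow> R * \<mu> j \<le> \<mu> l"
    and dec: "\<And>j l. j \<le> l \<Longrightarrow> l < d \<Longrightarrow> \<mu> l \<le> \<mu> j"
  shows "cone_potential (diag_map \<mu> ` W) R \<le> cone_potential W (1 / R)"
  unfolding cone_potential_def
proof (rule sum_mono)
  fix j assume "j \<in> {1..<d}"
  then have "cone_dim (diag_map \<mu> ` W) j R \<le> cone_dim W j (R / R\<^sup>2)"
    using assms by (intro cone_dim_diag_map_image_le[where q = "\<mu> j"]) auto
  then show "cone_dim (diag_map \<mu> ` W) j R \<le> cone_dim W j (1 / R)"
    using \<open>R > 0\<close> by (simp add: power2_eq_square)
qed

text \<open>The potential lies in a window of width k (d - k) and does not increase from W i at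
  aperture R to W i at aperture 1/R to W (Suc i) at aperture R; it must therefore stall within
  k (d - k) + 1 steps.\<close>
lemma stable_cone_dims_exist:
  assumes W: "\<And>i. subspace (W i)" "\<And>i. dim (W i) = k" and "k \<le> d" "R > 1"
    and step: "\<And>i. W (Suc i) = diag_map \<mu> ` W i"
    and \<mu>: "\<And>l. l < d \<Longrightarrow> \<mu> l > 0"
    and sep: "\<And>j l. 1 \<le> j \<Longrightarrow> j < d \<Longrightarrow> l < j \<Longrightarrow> R * \<mu> j \<le> \<mu> l"
    and dec: "\<And>j l. j \<le> l \<Longrightarrow> l < d \<Longrightarrow> \<mu> l \<le> \<mu> j"
  shows "\<exists>i < k * (d - k) + 1. \<forall>j. 1 \<le> j \<and> j < d \<longrightarrow> cone_dim (W i) j (1 / R) = cone_dim (W i) j R"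
proof -
  have "1 / R \<le> 1" using \<open>R > 1\<close> by simp
  then have "1 / R \<le> R" using \<open>R > 1\<close> by linarith
  have "\<exists>i < k * (d - k) + 1. cone_potential (W i) (1 / R) = cone_potential (W i) R"
  proof (rule interleaved_descent_stalls)
    show "cone_potential (W i) (1 / R) \<le> cone_potential (W i) R" for i
      by (rule cone_potential_mono[OF W(1) \<open>1 / R \<le> R\<close>])
    show "cone_potential (W (Suc i)) R \<le> cone_potential (W i) (1 / R)" for i
      unfolding step using cone_potential_diag_map_image_le[OF W(1)] \<open>R > 1\<close> \<mu> sep dec by simp
    let ?N = "k * (d - k) + 1"
    have "cone_potential (W 0) R \<le> (\<Sum>j\<in>{1..<d}. k - j) + k * (d - k)"
      using cone_potential_bounds(2)[OF W(1)[of 0] W(2)[of 0] \<open>k \<le> d\<close>] \<open>R > 1\<close> by simp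
    moreover have "(\<Sum>j\<in>{1..<d}. k - j) \<le> cone_potential (W ?N) R"
      using cone_potential_bounds(1)[OF W(1)[of ?N] W(2)[of ?N] \<open>k \<le> d\<close>] \<open>R > 1\<close> by simp
    ultimately show "cone_potential (W 0) R < cone_potential (W ?N) R + ?N" by linarith
  qed
  then obtain i where i: "i < k * (d - k) + 1"
    and eq: "cone_potential (W i) (1 / R) = cone_potential (W i) R" by blast
  have "cone_dim (W i) j (1 / R) = cone_dim (W i) j R" if "1 \<le> j" "j < d" for j
    using sum_mono_inv[OF eq[unfolded cone_potential_def], of j] cone_dim_mono[OF W(1) \<open>1 / R \<le> R\<close>]
      that by auto
  then show ?thesis using i by blast
qed

section \<open>Peaked vectors\<close>

definition peaked :: "real \<Rightarrow> nat \<Rightarrow> 'a \<Rightarrow> bool" where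
  "peaked \<rho> j v \<longleftrightarrow> v \<noteq> 0 \<and> (\<rho> - 1) * coord_sqsum ({..<d} - {j}) v \<le> 2 * (v \<bullet> e j)\<^sup>2"

lemma peaked_coord_nonzero:
  assumes "peaked \<rho> j v" "\<rho> > 1" "j < d"
  shows "v \<bullet> e j \<noteq> 0"
proof
  assume vj: "v \<bullet> e j = 0"
  then have "coord_sqsum ({..<d} - {j}) v \<le> 0"
    using assms(1,2) by (simp add: peaked_def mult_le_0_iff)
  then have "v \<bullet> e l = 0" if "l < d" for l
    using vj coord_sqsum_le_0_imp_coord_eq_0[of "{..<d} - {j}"] that by (cases "l = j") auto
  then show False using assms(1) coords_eq_0_imp_eq_0 by (auto simp: peaked_def)
qed

lemma dim_le_1_if_peaked:
  assumes "subspace I" "\<rho> > 1" "j < d" "\<And>v. v \<in> I \<Longrightarrow> v \<noteq> 0 \<Longrightarrow> peaked \<rho> j v"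
  shows "dim I \<le> 1"
proof -
  have "dim I \<le> card {j}"
  proof (rule dim_le_card_if_coords_determine[OF assms(1)])
    show "{j} \<subseteq> {..<d}" using assms(3) by simp
    fix v assume "v \<in> I" "\<And>l. l \<in> {j} \<Longrightarrow> v \<bullet> e l = 0"
    then show "v = 0" using assms(2-4) peaked_coord_nonzero by blast
  qed
  then show ?thesis by simp
qed

lemma positive_cone_complement_exists:
  assumes W: "subspace W"
  shows "\<exists>G. subspace G \<and> G \<subseteq> W \<and> dim W \<le> dim G + cone_dim W j \<rho> \<and>
    (\<forall>g\<in>G. g \<noteq> 0 \<longrightarrow> \<rho> * coord_sqsum {j..<d} g < coord_sqsum {..<j} g)"
proof -
  define B where "B x y = (\<Sum>i<j. (x \<bullet> e i) * (y \<bullet> e i)) - \<rho> * (\<Sum>i\<in>{j..<d}. (x \<bullet> e i) * (y \<bullet> e i))"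
    for x y
  have BB: "B x x = coord_sqsum {..<j} x - \<rho> * coord_sqsum {j..<d} x" for x
    unfolding B_def coord_sqsum_def by (simp add: power2_eq_square)
  interpret symmetric_form B
  proof
    show "B (x + y) z = B x z + B y z" for x y z
      by (simp add: B_def inner_add_left distrib_right sum.distrib distrib_left)
    show "B (c *\<^sub>R x) z = c * B x z" for c x z
      by (simp add: B_def sum_distrib_left right_diff_distrib mult.assoc mult.left_commute)
    show "B x y = B y x" for x y
      by (simp add: B_def mult.commute)
  qed
  have "dim U \<le> cone_dim W j \<rho>" if "subspace U" "U \<subseteq> W" "\<forall>u\<in>U. B u u \<le> 0" for U
    using that by (intro cone_dim_ge[OF W]) (auto simp: cone_subspace_def in_cone_def BB)
  then obtain G where "subspace G" "G \<subseteq> W" "dim W \<le> dim G + cone_dim W j \<rho>"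
      "\<forall>g\<in>G. g \<noteq> 0 \<longrightarrow> B g g > 0"
    using positive_subspace_exists[OF W] by blast
  then show ?thesis by (intro exI[of _ G]) (auto simp: BB)
qed

text \<open>The witness is the intersection of a maximal cone subspace of aperture 1/rho at j with a
  subspace on which the cone of aperture rho at j + 1 is strictly violated.\<close>
lemma cone_dim_drop_subspace:
  assumes W: "subspace W" and "j < d" "\<rho> > 1"
  shows "\<exists>I. subspace I \<and> I \<subseteq> W \<and> cone_dim W j (1 / \<rho>) \<le> cone_dim W (Suc j) \<rho> + dim I \<and>
    (\<forall>v\<in>I. v \<noteq> 0 \<longrightarrow> peaked \<rho> j v)"
proof -
  obtain S where S: "cone_subspace W j (1 / \<rho>) S" "dim S = cone_dim W j (1 / \<rho>)"
    using cone_dim_attained[OF W] by blast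
  obtain G where G: "subspace G" "G \<subseteq> W" "dim W \<le> dim G + cone_dim W (Suc j) \<rho>"
    "\<forall>g\<in>G. g \<noteq> 0 \<longrightarrow> \<rho> * coord_sqsum {Suc j..<d} g < coord_sqsum {..<Suc j} g"
    using positive_cone_complement_exists[OF W] by blast
  have sS: "subspace S" "S \<subseteq> W" using S(1) by (auto simp: cone_subspace_def)
  have "dim {x + y |x y. x \<in> S \<and> y \<in> G} + dim (S \<inter> G) = dim S + dim G"
    by (rule dim_sums_Int[OF sS(1) G(1)])
  moreover have "dim {x + y |x y. x \<in> S \<and> y \<in> G} \<le> dim W"
    using sS G W by (intro dim_subset) (auto intro: subspace_add)
  ultimately have "cone_dim W j (1 / \<rho>) \<le> cone_dim W (Suc j) \<rho> + dim (S \<inter> G)"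
    using S(2) G(3) by linarith
  moreover have "peaked \<rho> j v" if "v \<in> S \<inter> G" "v \<noteq> 0" for v
  proof -
    have "coord_sqsum {..<j} v \<le> 1 / \<rho> * coord_sqsum {j..<d} v"
      using S(1) that by (auto simp: cone_subspace_def in_cone_def)
    then have "\<rho> * coord_sqsum {..<j} v \<le> (v \<bullet> e j)\<^sup>2 + coord_sqsum {Suc j..<d} v"
      using \<open>\<rho> > 1\<close> \<open>j < d\<close> by (simp add: coord_sqsum_atLeast_split field_simps)
    moreover have "\<rho> * coord_sqsum {Suc j..<d} v < coord_sqsum {..<j} v + (v \<bullet> e j)\<^sup>2"
      using G(4) that by (simp add: coord_sqsum_lessThan_Suc)
    ultimately show ?thesis
      using that \<open>j < d\<close> by (simp add: peaked_def coord_sqsum_remove algebra_simps)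
  qed
  ultimately show ?thesis
    using subspace_inter[OF sS(1) G(1)] sS(2) by (intro exI[of _ "S \<inter> G"]) auto
qed

lemma cone_dim_drop:
  assumes W: "subspace W" and "j < d" "\<rho> > 1"
  shows "cone_dim W j (1 / \<rho>) \<le> cone_dim W (Suc j) \<rho> + 1"
    and "cone_dim W (Suc j) \<rho> < cone_dim W j (1 / \<rho>) \<Longrightarrow> \<exists>v\<in>W. peaked \<rho> j v"
proof -
  obtain I where I: "subspace I" "I \<subseteq> W" "cone_dim W j (1 / \<rho>) \<le> cone_dim W (Suc j) \<rho> + dim I"
    "\<forall>v\<in>I. v \<noteq> 0 \<longrightarrow> peaked \<rho> j v"
    using cone_dim_drop_subspace[OF assms] by blast
  have "dim I \<le> 1" using dim_le_1_if_peaked[OF I(1) \<open>\<rho> > 1\<close> \<open>j < d\<close>] I(4) by blast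
  then show "cone_dim W j (1 / \<rho>) \<le> cone_dim W (Suc j) \<rho> + 1" using I(3) by linarith
  assume "cone_dim W (Suc j) \<rho> < cone_dim W j (1 / \<rho>)"
  then have "\<not> I \<subseteq> {0}" using I(3) dim_eq_0[of I] by linarith
  then show "\<exists>v\<in>W. peaked \<rho> j v" using I(2,4) by blast
qed

text \<open>As j runs from 0 to d, cone_dim W j rho falls from dim W to 0 in unit steps, and each
  step yields a peaked vector.\<close>
lemma peaked_family_exists:
  assumes W: "subspace W" and "\<rho> > 1"
    and stable: "\<And>j. 1 \<le> j \<Longrightarrow> j < d \<Longrightarrow> cone_dim W j (1 / \<rho>) = cone_dim W j \<rho>"
  shows "\<exists>K f. K \<subseteq> {..<d} \<and> card K = dim W \<and> (\<forall>j\<in>K. f j \<in> W \<and> peaked \<rho> j (f j))"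
proof -
  define c where "c j = cone_dim W j \<rho>" for j
  have c_stable: "cone_dim W j (1 / \<rho>) = c j" if "j < d" for j
  proof (cases "j = 0")
    case True
    then show ?thesis using cone_dim_0[OF W] \<open>\<rho> > 1\<close> by (simp add: c_def)
  next
    case False
    then show ?thesis using stable[of j] that by (simp add: c_def)
  qed
  define K where "K = {j. j < d \<and> c (Suc j) < c j}"
  have "c j \<le> c (Suc j) + 1" if "j < d" for j
    using cone_dim_drop(1)[OF W that \<open>\<rho> > 1\<close>] c_stable[OF that] by (simp add: c_def)
  moreover have "c (Suc j) \<le> c j" if "j < d" for j
    using cone_dim_Suc_le[OF W that] \<open>\<rho> > 1\<close> by (simp add: c_def)
  ultimately have "card K = c 0 - c d"
    using card_strict_descents[of d c] unfolding K_def by blast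
  moreover have "c 0 = dim W" "c d = 0"
    using cone_dim_0[OF W] cone_dim_le_codim[OF W, of d] \<open>\<rho> > 1\<close> by (auto simp: c_def)
  moreover have "\<forall>j\<in>K. \<exists>v. v \<in> W \<and> peaked \<rho> j v"
    using cone_dim_drop(2)[OF W _ \<open>\<rho> > 1\<close>] c_stable unfolding K_def c_def by fastforce
  then have "\<exists>f. \<forall>j\<in>K. f j \<in> W \<and> peaked \<rho> j (f j)" by (rule bchoice)
  moreover have "K \<subseteq> {..<d}" by (auto simp: K_def)
  ultimately show ?thesis by auto
qed

text \<open>Split the combination into its diagonal part y and the off-diagonal remainder z;
  Cauchy-Schwarz bounds z by y.\<close>
lemma peaked_combination_bounds:
  fixes \<alpha> :: "nat \<Rightarrow> real"
  assumes K: "K \<subseteq> {..<d}" and f: "\<And>j. j \<in> K \<Longrightarrow> peaked \<rho> j (f j)"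
    and "\<rho> > 1" "0 < \<eta>" "\<eta> \<le> 1" and card: "8 * real (card K) \<le> (\<rho> - 1) * \<eta>"
  defines "v \<equiv> \<Sum>j\<in>K. \<alpha> j *\<^sub>R f j"
  shows "(norm (v - coord_proj K v))\<^sup>2 \<le> \<eta> * (norm v)\<^sup>2"
    and "(\<Sum>j\<in>K. (\<alpha> j * (f j \<bullet> e j))\<^sup>2) \<le> 4 * (norm v)\<^sup>2"
proof -
  define x where "x j = f j \<bullet> e j" for j
  define g where "g j = f j - x j *\<^sub>R e j" for j
  define y where "y = (\<Sum>j\<in>K. (\<alpha> j * x j) *\<^sub>R e j)"
  define z where "z = (\<Sum>j\<in>K. \<alpha> j *\<^sub>R g j)"
  have vyz: "v = y + z"
    unfolding v_def y_def z_def g_def by (simp add: sum.distrib[symmetric] scaleR_diff_right)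
  have "(norm (g j))\<^sup>2 \<le> 2 / (\<rho> - 1) * (x j)\<^sup>2" if "j \<in> K" for j
  proof -
    have "(\<rho> - 1) * (norm (g j))\<^sup>2 \<le> 2 * (x j)\<^sup>2"
      using f[OF that] norm_sq_remove_coord[of j "f j"] K that unfolding g_def x_def peaked_def by auto
    then show ?thesis using \<open>\<rho> > 1\<close> by (simp add: field_simps)
  qed
  then have "(norm z)\<^sup>2 \<le> 2 / (\<rho> - 1) * card K * (norm y)\<^sup>2"
    unfolding z_def y_def norm_sq_sum_basis[OF K] by (rule norm_sum_sq_le)
  also have "\<dots> \<le> \<eta> / 4 * (norm y)\<^sup>2"
    using card \<open>\<rho> > 1\<close> by (intro mult_right_mono) (simp_all add: field_simps)
  finally have z: "(norm z)\<^sup>2 \<le> \<eta> / 4 * (norm y)\<^sup>2" .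
  have "y \<in> span (e ` K)" unfolding y_def by (intro span_sum span_scale span_base) auto
  then have "v - coord_proj K v = z - coord_proj K z"
    using vyz coord_proj_span[OF K] linear_add[OF linear_coord_proj] by simp
  then have "(norm (v - coord_proj K v))\<^sup>2 \<le> (norm z)\<^sup>2"
    using norm_sq_coord_proj_add[OF K, of z] by simp
  moreover have "(norm z)\<^sup>2 \<le> \<eta> * (norm v)\<^sup>2"
    using norm_split_bounds(1)[OF z] \<open>0 < \<eta>\<close> \<open>\<eta> \<le> 1\<close> vyz by simp
  ultimately show "(norm (v - coord_proj K v))\<^sup>2 \<le> \<eta> * (norm v)\<^sup>2" by linarith
  have "norm y \<le> 2 * norm v" using norm_split_bounds(2)[OF z] \<open>0 < \<eta>\<close> \<open>\<eta> \<le> 1\<close> vyz by simp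
  then have "(norm y)\<^sup>2 \<le> (2 * norm v)\<^sup>2" by (rule power_mono) simp
  then show "(\<Sum>j\<in>K. (\<alpha> j * (f j \<bullet> e j))\<^sup>2) \<le> 4 * (norm v)\<^sup>2"
    unfolding y_def norm_sq_sum_basis[OF K] x_def by (simp add: power_mult_distrib)
qed

lemma peaked_combination_eq_0:
  assumes K: "K \<subseteq> {..<d}" and f: "\<And>j. j \<in> K \<Longrightarrow> peaked \<rho> j (f j)"
    and "\<rho> > 1" "0 < \<eta>" "\<eta> \<le> 1" "8 * real (card K) \<le> (\<rho> - 1) * \<eta>"
    and "(\<Sum>j\<in>K. \<alpha> j *\<^sub>R f j) = 0"
  shows "\<forall>j\<in>K. \<alpha> j = 0"
proof
  fix j assume "j \<in> K"
  have "(\<Sum>i\<in>K. (\<alpha> i * (f i \<bullet> e i))\<^sup>2) \<le> 0"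
    using peaked_combination_bounds(2)[OF assms(1-6), where \<alpha> = \<alpha>] assms(7) by simp
  moreover have finK: "finite K" using K finite_subset by blast
  ultimately have "(\<Sum>i\<in>K. (\<alpha> i * (f i \<bullet> e i))\<^sup>2) = 0"
    by (intro antisym sum_nonneg) auto
  then have "(\<alpha> j * (f j \<bullet> e j))\<^sup>2 = 0"
    using sum_nonneg_eq_0_iff[OF finK, of "\<lambda>i. (\<alpha> i * (f i \<bullet> e i))\<^sup>2"] \<open>j \<in> K\<close> by simp
  then show "\<alpha> j = 0"
    using peaked_coord_nonzero[OF f[OF \<open>j \<in> K\<close>] \<open>\<rho> > 1\<close>] K \<open>j \<in> K\<close> by auto
qed

lemma span_peaked_family:
  assumes K: "K \<subseteq> {..<d}" and W: "subspace W" and "card K = dim W"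
    and f: "\<And>j. j \<in> K \<Longrightarrow> f j \<in> W \<and> peaked \<rho> j (f j)"
    and "\<rho> > 1" "0 < \<eta>" "\<eta> \<le> 1" "8 * real (card K) \<le> (\<rho> - 1) * \<eta>"
  shows "inj_on f K" "W \<subseteq> span (f ` K)"
proof -
  have finK: "finite K" using K finite_subset by blast
  have peaked: "\<And>j. j \<in> K \<Longrightarrow> peaked \<rho> j (f j)" using f by blast
  note eq_0 = peaked_combination_eq_0[OF K peaked assms(5-8)]
  show inj: "inj_on f K"
  proof (rule inj_onI, rule ccontr)
    fix i j assume ij: "i \<in> K" "j \<in> K" "f i = f j" "i \<noteq> j"
    define \<alpha> where "\<alpha> l = (if l = i then 1 else if l = j then -1 else (0::real))" for l
    have "(\<Sum>l\<in>K. \<alpha> l *\<^sub>R f l) = (\<Sum>l\<in>{i, j}. \<alpha> l *\<^sub>R f l)"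
      using ij finK by (intro sum.mono_neutral_right) (auto simp: \<alpha>_def)
    also have "\<dots> = 0" using ij by (simp add: \<alpha>_def)
    finally have "\<alpha> i = 0" using eq_0 ij(1) by blast
    then show False by (simp add: \<alpha>_def)
  qed
  have "independent (f ` K)"
  proof
    assume "dependent (f ` K)"
    then obtain u where u: "\<exists>w\<in>f ` K. u w \<noteq> 0" "(\<Sum>w\<in>f ` K. u w *\<^sub>R w) = 0"
      using dependent_finite[of "f ` K"] finK by auto
    then have "(\<Sum>j\<in>K. u (f j) *\<^sub>R f j) = 0" using sum.reindex[OF inj, of "\<lambda>w. u w *\<^sub>R w"] by simp
    then have "\<forall>j\<in>K. u (f j) = 0" using eq_0[where \<alpha> = "\<lambda>j. u (f j)"] by blast
    then show False using u(1) by auto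
  qed
  moreover have "card (f ` K) = dim W" using assms(3) card_image[OF inj] by simp
  ultimately show "W \<subseteq> span (f ` K)"
    using card_eq_dim[of "f ` K" W] f finK by blast
qed

lemma peaked_family_close_to_coord_span:
  assumes K: "K \<subseteq> {..<d}" and W: "subspace W" and "card K = dim W"
    and f: "\<And>j. j \<in> K \<Longrightarrow> f j \<in> W \<and> peaked \<rho> j (f j)"
    and "\<rho> > 1" "0 < \<eta>" "\<eta> \<le> 1" "8 * real (card K) \<le> (\<rho> - 1) * \<eta>"
    and "v \<in> W"
  shows "(norm (v - coord_proj K v))\<^sup>2 \<le> \<eta> * (norm v)\<^sup>2"
proof -
  have finK: "finite K" using K finite_subset by blast
  note span = span_peaked_family[OF assms(1-8)]
  then obtain u where "v = (\<Sum>w\<in>f ` K. u w *\<^sub>R w)"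
    using \<open>v \<in> W\<close> unfolding span_finite[OF finite_imageI[OF finK]] by blast
  then have v: "v = (\<Sum>j\<in>K. u (f j) *\<^sub>R f j)"
    using sum.reindex[OF span(1), of "\<lambda>w. u w *\<^sub>R w"] by simp
  have peaked: "\<And>j. j \<in> K \<Longrightarrow> peaked \<rho> j (f j)" using f by blast
  show ?thesis
    using peaked_combination_bounds(1)[OF K peaked assms(5-8), where \<alpha> = "\<lambda>j. u (f j)"] v by simp
qed

lemma exists_close_coord_span:
  assumes W: "\<And>i. subspace (W i)" "\<And>i. dim (W i) = k" and "k \<le> d" "R > 1"
    and step: "\<And>i. W (Suc i) = diag_map \<mu> ` W i"
    and \<mu>: "\<And>l. l < d \<Longrightarrow> \<mu> l > 0"
    and sep: "\<And>j l. 1 \<le> j \<Longrightarrow> j < d \<Longrightarrow> l < j \<Longrightarrow> R * \<mu> j \<le> \<mu> l"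
    and dec: "\<And>j l. j \<le> l \<Longrightarrow> l < d \<Longrightarrow> \<mu> l \<le> \<mu> j"
    and "0 < \<eta>" "\<eta> \<le> 1" "8 * real k \<le> (R - 1) * \<eta>"
  shows "\<exists>i < k * (d - k) + 1. \<exists>K\<subseteq>{..<d}. card K = k \<and>
    (\<forall>v\<in>W i. (norm (v - coord_proj K v))\<^sup>2 \<le> \<eta> * (norm v)\<^sup>2)"
proof -
  obtain i where i: "i < k * (d - k) + 1"
    and stable: "\<And>j. 1 \<le> j \<Longrightarrow> j < d \<Longrightarrow> cone_dim (W i) j (1 / R) = cone_dim (W i) j R"
    using stable_cone_dims_exist[where W = W and \<mu> = \<mu>, OF W \<open>k \<le> d\<close> \<open>R > 1\<close> step \<mu> sep dec]
    by blast
  obtain K f where K: "K \<subseteq> {..<d}" "card K = dim (W i)"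
    and f: "\<forall>j\<in>K. f j \<in> W i \<and> peaked R j (f j)"
    using peaked_family_exists[OF W(1) \<open>R > 1\<close> stable] by blast
  have "8 * real (card K) \<le> (R - 1) * \<eta>" using K(2) W(2) assms(11) by simp
  then have "\<forall>v\<in>W i. (norm (v - coord_proj K v))\<^sup>2 \<le> \<eta> * (norm v)\<^sup>2"
    using peaked_family_close_to_coord_span[OF K(1) W(1) K(2) _ \<open>R > 1\<close> assms(9,10)] f by blast
  then show ?thesis using i K W(2) by auto
qed

lemma coord_proj_ratio_bounds:
  assumes "A \<subseteq> {..<d}" "v \<noteq> 0" "(norm (v - coord_proj A v))\<^sup>2 \<le> \<eta> * (norm v)\<^sup>2" "0 \<le> \<eta>" "\<eta> \<le> 1"
  shows "1 - \<eta> \<le> norm (coord_proj A v) / norm v" "norm (coord_proj A v) / norm v \<le> 1"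
proof -
  note split = norm_sq_coord_proj_add[OF assms(1), of v]
  have "(norm (coord_proj A v))\<^sup>2 \<le> (norm v)\<^sup>2" using split by simp
  then have le: "norm (coord_proj A v) \<le> norm v" by (rule power2_le_imp_le) simp
  have "(1 - \<eta>)\<^sup>2 \<le> 1 - \<eta>"
    using assms(4,5) unfolding power2_eq_square by (intro mult_left_le_one_le) simp_all
  then have "((1 - \<eta>) * norm v)\<^sup>2 \<le> (1 - \<eta>) * (norm v)\<^sup>2"
    by (simp add: power_mult_distrib mult_right_mono)
  also have "\<dots> \<le> (norm (coord_proj A v))\<^sup>2" using split assms(3) by (simp add: algebra_simps)
  finally have "(1 - \<eta>) * norm v \<le> norm (coord_proj A v)" by (rule power2_le_imp_le) simp
  then show "1 - \<eta> \<le> norm (coord_proj A v) / norm v" "norm (coord_proj A v) / norm v \<le> 1"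
    using le assms(2) by (simp_all add: field_simps)
qed

lemma cos_theta_max_span_basis_ge:
  assumes K: "K \<subseteq> {..<d}" and "v \<in> W" "v \<noteq> 0"
    and close: "\<forall>v\<in>W. (norm (v - coord_proj K v))\<^sup>2 \<le> \<eta> * (norm v)\<^sup>2" and "0 < \<eta>" "\<eta> < 1"
  shows "1 - \<eta> \<le> cos (theta_max W (span (e ` K)))"
proof -
  define S where "S = {norm (orth_proj (span (e ` K)) v) / norm v | v. v \<in> W \<and> v \<noteq> 0}"
  have S: "1 - \<eta> \<le> s \<and> s \<le> 1" if "s \<in> S" for s
    using that coord_proj_ratio_bounds[OF K _ _ less_imp_le less_imp_le] close assms(5,6)
    unfolding S_def orth_proj_span_basis[OF K] by blast
  have "S \<noteq> {}" using assms(2,3) unfolding S_def by blast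
  then have "1 - \<eta> \<le> Inf S" "Inf S \<le> 1"
    using S cInf_greatest[of S] cInf_lower[of _ S] bdd_belowI[of S "1 - \<eta>"] by (auto intro: order_trans)
  then show ?thesis
    unfolding theta_max_def S_def[symmetric] using assms(6) by (simp add: cos_arccos)
qed

text \<open>The scales a R^i with R = 4 (2^d / eta) and i \<le> k (d - k) stay in [a, b] by the
  ratio assumption.\<close>
lemma exists_scale_close_coord_span:
  fixes w :: "nat \<Rightarrow> nat"
  assumes w: "\<forall>i j. i < j \<and> j < d \<longrightarrow> w i < w j"
    and H: "subspace H" "dim H = k" and "1 \<le> k" "k \<le> d"
    and "0 < \<eta>" "\<eta> < 1/2" "0 < a" "a \<le> b" and ratio: "(2 ^ d / \<eta>) ^ (d * k + 2) \<le> b / a"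
  shows "\<exists>\<delta>\<in>{a..b}. \<exists>K\<subseteq>{..<d}. card K = k \<and>
    (\<forall>v\<in>diag_map (\<lambda>l. \<delta> powr - real (w l)) ` H. (norm (v - coord_proj K v))\<^sup>2 \<le> \<eta> * (norm v)\<^sup>2)"
proof (cases "k = d")
  case True
  then show ?thesis using \<open>a \<le> b\<close> H(2) \<open>0 < \<eta>\<close> by (intro bexI[of _ a] exI[of _ "{..<d}"]) (auto simp: coord_proj_all)
next
  case False
  define X where "X = 2 ^ d / \<eta>"
  define R where "R = 4 * X"
  define W where "W i = diag_map (\<lambda>l. (a * R ^ i) powr - real (w l)) ` H" for i
  note R = dilation_ratio_bounds[OF \<open>1 \<le> k\<close> _ \<open>0 < \<eta>\<close> \<open>\<eta> < 1/2\<close>, of d, folded X_def R_def]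
  have "k < d" using False \<open>k \<le> d\<close> by simp
  have "\<exists>i < k * (d - k) + 1. \<exists>K\<subseteq>{..<d}. card K = k \<and>
      (\<forall>v\<in>W i. (norm (v - coord_proj K v))\<^sup>2 \<le> \<eta> * (norm v)\<^sup>2)"
  proof (rule exists_close_coord_span)
    show "subspace (W i)" "dim (W i) = k" for i
      unfolding W_def using H \<open>0 < a\<close> R(1)[OF \<open>k < d\<close>]
      by (simp_all add: linear_subspace_image[OF linear_diag_map] dim_diag_map_image)
    show "W (Suc i) = diag_map (\<lambda>l. R powr - real (w l)) ` W i" for i
      unfolding W_def using \<open>0 < a\<close> R(1)[OF \<open>k < d\<close>]
      by (simp add: image_comp diag_map_powr_mult[symmetric] mult.assoc mult.commute[of R])
  qed (use R[OF \<open>k < d\<close>] powr_weights_separated[OF _ w] \<open>k \<le> d\<close> \<open>0 < \<eta>\<close> \<open>\<eta> < 1/2\<close> in auto)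
  then obtain i K where i: "i < k * (d - k) + 1" and K: "K \<subseteq> {..<d}" "card K = k"
    and close: "\<forall>v\<in>W i. (norm (v - coord_proj K v))\<^sup>2 \<le> \<eta> * (norm v)\<^sup>2" by blast
  have "a \<le> a * R ^ i" using \<open>0 < a\<close> R(1)[OF \<open>k < d\<close>] by (simp add: one_le_power)
  moreover have "a * R ^ i \<le> a * R ^ (k * (d - k) + 1)"
    using \<open>0 < a\<close> R(1)[OF \<open>k < d\<close>] i by (intro mult_left_mono power_increasing) auto
  moreover have "a * R ^ (k * (d - k) + 1) \<le> b"
  proof -
    have "R ^ (k * (d - k) + 1) \<le> b / a"
      using R(3)[OF \<open>k < d\<close>] ratio by (simp add: X_def mult.commute[of d k])
    then show ?thesis using \<open>0 < a\<close> by (simp add: pos_le_divide_eq mult.commute)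
  qed
  ultimately show ?thesis using K close unfolding W_def by (intro bexI[of _ "a * R ^ i"]) auto
qed

end

lemma orthonormal_basis_enum:
  fixes u :: "nat \<Rightarrow> 'a::euclidean_space"
  assumes "finite N" "\<And>i j. i \<in> N \<Longrightarrow> j \<in> N \<Longrightarrow> u i \<bullet> u j = (if i = j then 1 else 0)"
    and "span (u ` N) = UNIV"
  shows "\<exists>w. orthonormal_basis (u \<circ> w) (card N) \<and> (\<forall>i<card N. w i \<in> N) \<and>
    (\<forall>i j. i < j \<and> j < card N \<longrightarrow> w i < w j)"
proof -
  define xs where "xs = sorted_list_of_set N"
  have xs: "set xs = N" "sorted_wrt (<) xs" "length xs = card N"
    using assms(1) by (simp_all add: xs_def)
  define w where "w i = xs ! i" for i
  have wN: "w i \<in> N" if "i < card N" for i using xs that by (auto simp: w_def)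
  have dist: "distinct xs" using xs(2) by (simp add: strict_sorted_iff)
  have "orthonormal_basis (u \<circ> w) (card N)"
  proof
    fix i j assume ij: "i < card N" "j < card N"
    then have "w i = w j \<longleftrightarrow> i = j" using dist xs(3) by (simp add: w_def nth_eq_iff_index_eq)
    then show "(u \<circ> w) i \<bullet> (u \<circ> w) j = (if i = j then 1 else 0)"
      using assms(2) wN ij by auto
  next
    have "w ` {..<card N} = N" using xs by (auto simp: w_def set_conv_nth)
    then show "span ((u \<circ> w) ` {..<card N}) = UNIV" using assms(3) by (metis image_comp)
  qed
  moreover have "w i < w j" if "i < j" "j < card N" for i j
    using sorted_wrt_nth_less[OF xs(2) that(1)] that(2) xs(3) by (simp add: w_def)
  ultimately show ?thesis using wN by blast
qed

lemma dilation_system_orthonormal_lines: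
  fixes Xs :: "nat \<Rightarrow> 'a::euclidean_space set"
  assumes "hilbert_dilation_system Xs m tau" "simple_dilation_system Xs m"
  shows "\<exists>N u. finite N \<and> N \<subseteq> {1..m} \<and> (\<forall>\<nu>\<in>N. u \<nu> \<in> Xs \<nu>) \<and>
    (\<forall>\<nu>\<in>N. \<forall>\<nu>'\<in>N. u \<nu> \<bullet> u \<nu>' = (if \<nu> = \<nu>' then 1 else 0)) \<and> span (u ` N) = UNIV"
proof -
  have sub: "\<And>\<nu>. \<nu> \<in> {1..m} \<Longrightarrow> subspace (Xs \<nu>)"
    and orth: "\<And>i j x y. i \<in> {1..m} \<Longrightarrow> j \<in> {1..m} \<Longrightarrow> i \<noteq> j \<Longrightarrow> x \<in> Xs i \<Longrightarrow> y \<in> Xs j \<Longrightarrow> x \<bullet> y = 0"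
    and span: "span (\<Union>\<nu>\<in>{1..m}. Xs \<nu>) = UNIV"
    and dim: "\<And>\<nu>. \<nu> \<in> {1..m} \<Longrightarrow> dim (Xs \<nu>) \<le> 1"
    using assms unfolding hilbert_dilation_system_def simple_dilation_system_def by blast+
  define N where "N = {\<nu> \<in> {1..m}. Xs \<nu> \<noteq> {0}}"
  define u where "u \<nu> = (SOME u. u \<in> Xs \<nu> \<and> norm u = 1 \<and> (\<forall>x\<in>Xs \<nu>. x = (x \<bullet> u) *\<^sub>R u))" for \<nu>
  have u: "u \<nu> \<in> Xs \<nu> \<and> norm (u \<nu>) = 1 \<and> (\<forall>x\<in>Xs \<nu>. x = (x \<bullet> u \<nu>) *\<^sub>R u \<nu>)" if "\<nu> \<in> N" for \<nu>
  proof -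
    have \<nu>: "\<nu> \<in> {1..m}" "Xs \<nu> \<noteq> {0}" using that by (auto simp: N_def)
    show ?thesis
      unfolding u_def by (rule someI_ex[OF unit_vector_spans_line[OF sub[OF \<nu>(1)] dim[OF \<nu>(1)] \<nu>(2)]])
  qed
  have "u \<nu> \<bullet> u \<nu>' = (if \<nu> = \<nu>' then 1 else 0)" if "\<nu> \<in> N" "\<nu>' \<in> N" for \<nu> \<nu>'
  proof (cases "\<nu> = \<nu>'")
    case True
    then show ?thesis using u[OF that(1)] by (simp add: dot_square_norm)
  next
    case False
    then show ?thesis using u[OF that(1)] u[OF that(2)] orth[of \<nu> \<nu>'] that by (simp add: N_def)
  qed
  moreover have "Xs \<nu> \<subseteq> span (u ` N)" if "\<nu> \<in> {1..m}" for \<nu>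
  proof (cases "\<nu> \<in> N")
    case True
    have "u \<nu> \<in> span (u ` N)" using True by (simp add: span_base)
    then show ?thesis using u[OF True] by (metis span_scale subsetI)
  next
    case False
    then show ?thesis using that by (auto simp: N_def span_zero)
  qed
  then have "span (\<Union>\<nu>\<in>{1..m}. Xs \<nu>) \<subseteq> span (u ` N)" by (simp add: UN_subset_iff span_minimal)
  ultimately show ?thesis using u span by (intro exI[of _ N] exI[of _ u]) (auto simp: N_def)
qed

lemma dilation_system_diagonal_basis:
  fixes Xs :: "nat \<Rightarrow> 'a::euclidean_space set"
  assumes "hilbert_dilation_system Xs m tau" "simple_dilation_system Xs m"
  shows "\<exists>e w. orthonormal_basis e DIM('a) \<and> (\<forall>i j. i < j \<and> j < DIM('a) \<longrightarrow> (w i :: nat) < w j) \<and>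
    (\<forall>\<delta>>0. tau \<delta> = orthonormal_basis.diag_map e DIM('a) (\<lambda>l. \<delta> powr - real (w l)))"
proof -
  have lin: "\<And>\<delta>. \<delta> > 0 \<Longrightarrow> linear (tau \<delta>)"
    and tau: "\<And>\<delta> \<nu> x. \<delta> > 0 \<Longrightarrow> \<nu> \<in> {1..m} \<Longrightarrow> x \<in> Xs \<nu> \<Longrightarrow> tau \<delta> x = (\<delta> powr - real \<nu>) *\<^sub>R x"
    using assms(1) unfolding hilbert_dilation_system_def by blast+
  obtain N u where N: "finite N" "N \<subseteq> {1..m}" "\<forall>\<nu>\<in>N. u \<nu> \<in> Xs \<nu>"
    and orthonormal: "\<And>\<nu> \<nu>'. \<nu> \<in> N \<Longrightarrow> \<nu>' \<in> N \<Longrightarrow> u \<nu> \<bullet> u \<nu>' = (if \<nu> = \<nu>' then 1 else 0)"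
    and spanning: "span (u ` N) = UNIV"
    using dilation_system_orthonormal_lines[OF assms] by blast
  obtain w where w: "orthonormal_basis (u \<circ> w) (card N)" "\<forall>i<card N. w i \<in> N"
      "\<forall>i j. i < j \<and> j < card N \<longrightarrow> w i < w j"
    using orthonormal_basis_enum[OF N(1) orthonormal spanning] by blast
  interpret orthonormal_basis "u \<circ> w" "card N" by (rule w(1))
  have "tau \<delta> = diag_map (\<lambda>l. \<delta> powr - real (w l))" if "\<delta> > 0" for \<delta>
  proof (rule linear_eq_diag_map[OF lin[OF that]])
    fix i assume "i < card N"
    then have "w i \<in> N" using w(2) by blast
    then show "tau \<delta> ((u \<circ> w) i) = (\<delta> powr - real (w i)) *\<^sub>R (u \<circ> w) i"
      using N(2,3) tau[OF that] by auto
  qed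
  then show ?thesis using w(1,3) dim_eq_DIM by auto
qed

theorem proposition4p3:
  fixes Xs :: "nat \<Rightarrow> 'a::euclidean_space set" and m :: nat
    and tau :: "real \<Rightarrow> 'a \<Rightarrow> 'a"
    and k :: nat and H :: "'a set" and \<eta> a b :: real
  assumes "hilbert_dilation_system Xs m tau"
    and "simple_dilation_system Xs m"
    and "1 \<le> k" and "k \<le> DIM('a)"
    and "subspace H" and "dim H = k"
    and "0 < \<eta>" and "\<eta> < 1/2"
    and "0 < a" and "a \<le> b"
    and "b / a \<ge> (2 ^ DIM('a) / \<eta>) ^ (DIM('a) * k + 2)"
  shows "\<exists>\<delta>\<in>{a..b}. \<exists>V. subspace V \<and> dim V = k \<and> dilation_invariant tau V \<and>
           cos (theta_max (tau \<delta> ` H) V) \<ge> 1 - \<eta>"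
proof -
  obtain e w where basis: "orthonormal_basis e DIM('a)" and w: "\<forall>i j. i < j \<and> j < DIM('a) \<longrightarrow> w i < w j"
    and tau: "\<forall>\<delta>>0. tau \<delta> = orthonormal_basis.diag_map e DIM('a) (\<lambda>l. \<delta> powr - real (w l))"
    using dilation_system_diagonal_basis[OF assms(1,2)] by blast
  interpret orthonormal_basis e "DIM('a)" by (rule basis)
  obtain \<delta> K where \<delta>: "\<delta> \<in> {a..b}" and K: "K \<subseteq> {..<DIM('a)}" "card K = k"
    and close: "\<forall>v\<in>tau \<delta> ` H. (norm (v - coord_proj K v))\<^sup>2 \<le> \<eta> * (norm v)\<^sup>2"
    using exists_scale_close_coord_span[OF w assms(5,6,3,4,7-11)] tau assms(9) by fastforce
  have "dim (tau \<delta> ` H) = k" using tau \<delta> assms(6,9) by (simp add: dim_diag_map_image)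
  then obtain v where "v \<in> tau \<delta> ` H" "v \<noteq> 0" using assms(3) dim_eq_0 by (metis not_one_le_zero subsetI singletonI)
  then have "1 - \<eta> \<le> cos (theta_max (tau \<delta> ` H) (span (e ` K)))"
    using cos_theta_max_span_basis_ge[OF K(1) _ _ close] assms(7,8) by simp
  moreover have "dilation_invariant tau (span (e ` K))"
    using tau diag_map_span_basis[OF K(1)] by (simp add: dilation_invariant_def)
  moreover have "dim (span (e ` K)) = k" using dim_span_basis[OF K(1)] K(2) by simp
  ultimately show ?thesis using \<delta> by (intro bexI[of _ \<delta>] exI[of _ "span (e ` K)"]) auto
qed

end
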